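(* Suppose $1<q<n+1$. Let $\mu$ be a nonzero finite Borel measure on $S^{n-1}$ and $\overline\mu_m$ be constructed as in the context. Let $$E_m=\Big\{x\in\mathbb R^n:\frac{|x\cdot e_{1,m}|^2}{r_{1,m}^2}+\dots+\frac{|x\cdot e_{n,m}|^2}{r_{n,m}^2}\le1\Big\},$$ where $e_{1,m},\dots,e_{n,m}$ is an orthonormal basis of $\mathbb R^n$ and $0<r_{1,m}\le\dots\le r_{n,m}$. Assume $e_{1,m},\dots,e_{n,m}$ converge to an orthonormal basis $e_1,\dots,e_n$ and $r_{n,m}\ge1$. If $\mu$ satisfies $\frac{\mu(\xi_i\cap S^{n-1})}{|\mu|}<\frac{i+\min\{i,q-1\}}{n+q-1}$ for every $i$-dimensional subspace $\xi_i$, $i=1,\dots,n-1$, then there exist $\delta_0,t_0\in(0,1)$ and $N_0>0$ such that for each $m>N_0$, $$\frac{1}{|\overline\mu_m|}\int_{S^{n-1}}\log h_{E_m}\,d\overline\mu_m\ge\log\frac{\delta_0}{2}+t_0\log r_{n,m}+(1-t_0)\Bigg[\sum_{i=1}^{\lfloor q\rfloor-1}\frac{2}{n+q-1}\log r_{i,m}+\frac{q-\lfloor q\rfloor+1}{n+q-1}\log r_{\lfloor q\rfloor,m}+\sum_{i=\lfloor q\rfloor+1}^{n}\frac{1}{n+q-1}\log r_{i,m}\Bigg],$$ where a sum is empty if its upper index is smaller than its lower index.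
   Context: $h_K(v)=\max_{x\in K}x\cdot v$; $|\nu|$ is total mass. Construction: for each positive integer $m$, $U_{1,m},\dots,U_{\mathcal N_m,m}$ is a partition of $S^{n-1}$ into Borel sets of diameter less than $1/m$ with nonempty interior relative to $S^{n-1}$, $v_{i,m}\in U_{i,m}$ are in general position in dimension $n$, $\mu_m=\sum_{i=1}^{\mathcal N_m}(\mu(U_{i,m})+\mathcal N_m^{-2})\delta_{v_{i,m}}$ and $\overline\mu_m=\frac{|\mu|}{|\mu_m|}\mu_m$. *)

theory Defs
  imports "HOL-Analysis.Analysis"
begin

definition support_fun :: "'a::real_inner set \<Rightarrow> 'a \<Rightarrow> real" where
  "support_fun K u = (SUP x\<in>K. x \<bullet> u)"

definition total_mass :: "'a measure \<Rightarrow> real" where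
  "total_mass M = measure M (space M)"

definition discrete_measure :: "nat \<Rightarrow> (nat \<Rightarrow> 'a::topological_space) \<Rightarrow> (nat \<Rightarrow> real) \<Rightarrow> 'a measure" where
  "discrete_measure N v w =
     measure_of UNIV (sets borel) (\<lambda>A. \<Sum>i\<in>{1..N}. ennreal (w i) * indicator A (v i))"

definition general_position :: "nat \<Rightarrow> nat set \<Rightarrow> (nat \<Rightarrow> 'a::real_vector) \<Rightarrow> bool" where
  "general_position d I v \<longleftrightarrow>
     (\<forall>J\<subseteq>I. card J \<le> d \<longrightarrow> inj_on v J \<and> independent (v ` J))"

definition sphere_partition :: "nat \<Rightarrow> nat \<Rightarrow> (nat \<Rightarrow> 'a::euclidean_space set) \<Rightarrow> bool" where
  "sphere_partition m N U \<longleftrightarrow>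
     (\<forall>i\<in>{1..N}. U i \<in> sets borel \<and> U i \<subseteq> sphere 0 1 \<and> diameter (U i) < 1 / real m
                 \<and> (top_of_set (sphere 0 1)) interior_of (U i) \<noteq> {}) \<and>
     (\<forall>i\<in>{1..N}. \<forall>j\<in>{1..N}. i \<noteq> j \<longrightarrow> U i \<inter> U j = {}) \<and>
     (\<Union>i\<in>{1..N}. U i) = sphere 0 1"

definition approx_measure :: "'a::euclidean_space measure \<Rightarrow> nat \<Rightarrow> (nat \<Rightarrow> 'a set) \<Rightarrow> (nat \<Rightarrow> 'a) \<Rightarrow> 'a measure" where
  "approx_measure \<mu> N U v = discrete_measure N v (\<lambda>i. measure \<mu> (U i) + 1 / (real N)\<^sup>2)"

definition approx_measure_normalized :: "'a::euclidean_space measure \<Rightarrow> nat \<Rightarrow> (nat \<Rightarrow> 'a set) \<Rightarrow> (nat \<Rightarrow> 'a) \<Rightarrow> 'a measure" where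
  "approx_measure_normalized \<mu> N U v =
     scale_measure (ennreal (total_mass \<mu> / total_mass (approx_measure \<mu> N U v))) (approx_measure \<mu> N U v)"

definition orthonormal_family :: "nat \<Rightarrow> (nat \<Rightarrow> 'a::real_inner) \<Rightarrow> bool" where
  "orthonormal_family n e \<longleftrightarrow> (\<forall>i\<in>{1..n}. \<forall>j\<in>{1..n}. e i \<bullet> e j = (if i = j then 1 else 0))"

definition ellipsoid :: "nat \<Rightarrow> (nat \<Rightarrow> 'a::real_inner) \<Rightarrow> (nat \<Rightarrow> real) \<Rightarrow> 'a set" where
  "ellipsoid n e r = {x. (\<Sum>i\<in>{1..n}. \<bar>x \<bullet> e i\<bar>\<^sup>2 / (r i)\<^sup>2) \<le> 1}"

end

theory Submission
  imports Defs
begin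

(* Write h for the support function of E_m, \<lambda>_i = log r_{i,m}, and let x be a unit vector.
  If j is the largest index with |x . e_{j,m}| > \<delta>, then h(x) \<ge> \<delta> r_{j,m}, that is
  log h(x) \<ge> log \<delta> + \<lambda>_n - \<Sum>_{i \<ge> j} (\<lambda>_{i+1} - \<lambda>_i); such a j exists once n \<delta>^2 < 1.
  Averaging over the discrete measure, the nonnegative increment \<lambda>_{i+1} - \<lambda>_i is weighted by
  the mass of the slab of unit vectors whose coordinates i+1, ..., n are at most \<delta>.
  Each piece U_{j,m} has diameter < 1/m and e_{l,m} \<rightarrow> e_l, so for large m this mass is at most
  \<mu>(slab of width \<rho> around the span of e_1, ..., e_i) + 1/N_m, and N_m > m.  By continuity of
  \<mu> from above and the subspace condition, for small \<rho> and t this is below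
  (1 - t) (i + min(i, q-1))/(n+q-1) |\<mu>|.  Summation by parts turns
  \<lambda>_n - \<Sum>_i (i + min(i, q-1))/(n+q-1) (\<lambda>_{i+1} - \<lambda>_i) into the bracket of the statement. *)

lemma orthonormal_family_inner:
  "orthonormal_family n e \<Longrightarrow> a \<in> {1..n} \<Longrightarrow> b \<in> {1..n} \<Longrightarrow>
     e a \<bullet> e b = (if a = b then 1 else 0)"
  unfolding orthonormal_family_def by blast

lemma orthonormal_family_norm:
  "orthonormal_family n e \<Longrightarrow> i \<in> {1..n} \<Longrightarrow> norm (e i) = 1"
  using orthonormal_family_inner[of n e i i] by (simp add: norm_eq_sqrt_inner)

lemma orthonormal_family_mono:
  "orthonormal_family n e \<Longrightarrow> i \<le> n \<Longrightarrow> orthonormal_family i e"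
  unfolding orthonormal_family_def by auto

lemma orthonormal_family_inj_on:
  assumes "orthonormal_family n e"
  shows "inj_on e {1..n}"
proof (rule inj_onI, rule ccontr)
  fix a b assume "a \<in> {1..n}" "b \<in> {1..n}" "e a = e b" "a \<noteq> b"
  then show False
    using orthonormal_family_inner[OF assms, of a a] orthonormal_family_inner[OF assms, of a b]
    by simp
qed

lemma orthonormal_family_independent:
  assumes "orthonormal_family n e"
  shows "independent (e ` {1..n})"
proof (rule pairwise_orthogonal_independent)
  show "pairwise orthogonal (e ` {1..n})"
    using assms unfolding pairwise_def orthogonal_def orthonormal_family_def by fastforce
  show "0 \<notin> e ` {1..n}"
    using orthonormal_family_norm[OF assms] by force
qed

lemma dim_span_orthonormal_family:
  fixes e :: "nat \<Rightarrow> 'a::euclidean_space"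
  assumes "orthonormal_family i e"
  shows "dim (span (e ` {1..i})) = i"
  using dim_span_eq_card_independent[OF orthonormal_family_independent[OF assms]]
    orthonormal_family_inj_on[OF assms] by (simp add: card_image)

lemma orthonormal_family_expansion:
  fixes e :: "nat \<Rightarrow> 'a::euclidean_space"
  assumes onf: "orthonormal_family DIM('a) e"
  shows "x = (\<Sum>l\<in>{1..DIM('a)}. (x \<bullet> e l) *\<^sub>R e l)"
proof -
  let ?B = "e ` {1..DIM('a)}"
  have "card ?B = dim (UNIV :: 'a set)"
    using orthonormal_family_inj_on[OF onf] by (simp add: card_image dim_UNIV)
  then have span_B: "UNIV \<subseteq> span ?B"
    using card_eq_dim[of ?B UNIV] orthonormal_family_independent[OF onf] by simp
  define y where "y = x - (\<Sum>l\<in>{1..DIM('a)}. (x \<bullet> e l) *\<^sub>R e l)"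
  have y_orth: "y \<bullet> e k = 0" if k: "k \<in> {1..DIM('a)}" for k
  proof -
    have "(\<Sum>l\<in>{1..DIM('a)}. (x \<bullet> e l) *\<^sub>R e l) \<bullet> e k
        = (\<Sum>l\<in>{1..DIM('a)}. (x \<bullet> e l) * (e l \<bullet> e k))"
      by (simp add: inner_sum_left)
    also have "\<dots> = (\<Sum>l\<in>{1..DIM('a)}. if l = k then x \<bullet> e k else 0)"
      using onf k unfolding orthonormal_family_def by (intro sum.cong) auto
    finally show ?thesis
      using k unfolding y_def by (simp add: inner_diff_left)
  qed
  have "orthogonal y y"
  proof (rule orthogonal_to_span[where S = ?B])
    show "y \<in> span ?B" using span_B by auto
    show "orthogonal y z" if "z \<in> ?B" for z
      using that y_orth by (auto simp: orthogonal_def)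
  qed
  then show ?thesis
    unfolding y_def by (simp add: orthogonal_def)
qed

lemma orthonormal_family_parseval:
  fixes e :: "nat \<Rightarrow> 'a::euclidean_space"
  assumes "orthonormal_family DIM('a) e"
  shows "(norm x)\<^sup>2 = (\<Sum>l\<in>{1..DIM('a)}. (x \<bullet> e l)\<^sup>2)"
proof -
  have "(norm x)\<^sup>2 = x \<bullet> (\<Sum>l\<in>{1..DIM('a)}. (x \<bullet> e l) *\<^sub>R e l)"
    by (subst orthonormal_family_expansion[OF assms, symmetric]) (simp add: power2_norm_eq_inner)
  then show ?thesis
    by (simp add: inner_sum_right power2_eq_square)
qed

lemma span_orthonormal_prefix_iff:
  fixes e :: "nat \<Rightarrow> 'a::euclidean_space"
  assumes onf: "orthonormal_family DIM('a) e" and i: "i \<le> DIM('a)"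
  shows "x \<in> span (e ` {1..i}) \<longleftrightarrow> (\<forall>l\<in>{Suc i..DIM('a)}. x \<bullet> e l = 0)"
proof
  assume x: "x \<in> span (e ` {1..i})"
  show "\<forall>l\<in>{Suc i..DIM('a)}. x \<bullet> e l = 0"
  proof
    fix l assume l: "l \<in> {Suc i..DIM('a)}"
    have "orthogonal (e l) x"
      using l i by (intro orthogonal_to_span[OF x])
        (auto simp: orthogonal_def orthonormal_family_inner[OF onf])
    then show "x \<bullet> e l = 0"
      by (simp add: orthogonal_def inner_commute)
  qed
next
  assume "\<forall>l\<in>{Suc i..DIM('a)}. x \<bullet> e l = 0"
  then have "(\<Sum>l\<in>{1..DIM('a)}. (x \<bullet> e l) *\<^sub>R e l) = (\<Sum>l\<in>{1..i}. (x \<bullet> e l) *\<^sub>R e l)"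
    using i by (intro sum.mono_neutral_right) auto
  then have "x = (\<Sum>l\<in>{1..i}. (x \<bullet> e l) *\<^sub>R e l)"
    using orthonormal_family_expansion[OF onf, of x] by simp
  also have "\<dots> \<in> span (e ` {1..i})"
    by (intro span_sum span_scale span_base) auto
  finally show "x \<in> span (e ` {1..i})" .
qed

lemma support_fun_ge:
  fixes K :: "'a::real_inner set"
  assumes "bounded K" "x \<in> K"
  shows "x \<bullet> u \<le> support_fun K u"
proof -
  have "bounded ((\<lambda>x. x \<bullet> u) ` K)"
    using assms(1) by (rule bounded_linear_image) (rule bounded_linear_inner_left)
  then show ?thesis
    unfolding support_fun_def using assms(2) by (intro cSUP_upper bounded_imp_bdd_above)
qed

lemma convex_on_support_fun:
  fixes K :: "'a::real_inner set"
  assumes "bounded K" "K \<noteq> {}"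
  shows "convex_on UNIV (support_fun K)"
proof (rule convex_onI)
  fix t :: real and x y :: 'a
  assume t: "0 < t" "t < 1"
  show "support_fun K ((1 - t) *\<^sub>R x + t *\<^sub>R y) \<le> (1 - t) * support_fun K x + t * support_fun K y"
    unfolding support_fun_def[of K "(1 - t) *\<^sub>R x + t *\<^sub>R y"]
  proof (rule cSUP_least[OF assms(2)])
    fix z assume "z \<in> K"
    then have "(1 - t) * (z \<bullet> x) + t * (z \<bullet> y) \<le> (1 - t) * support_fun K x + t * support_fun K y"
      using t assms(1) by (intro add_mono mult_left_mono support_fun_ge) auto
    then show "z \<bullet> ((1 - t) *\<^sub>R x + t *\<^sub>R y) \<le> (1 - t) * support_fun K x + t * support_fun K y"
      by (simp add: inner_add_right)
  qed
qed auto

lemma bounded_ellipsoid: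
  fixes e :: "nat \<Rightarrow> 'a::euclidean_space"
  assumes onf: "orthonormal_family DIM('a) e"
    and r_pos: "\<And>i. i \<in> {1..DIM('a)} \<Longrightarrow> 0 < r i"
  shows "bounded (ellipsoid DIM('a) e r)"
proof -
  have "norm y \<le> sqrt (\<Sum>i\<in>{1..DIM('a)}. (r i)\<^sup>2)" if y: "y \<in> ellipsoid DIM('a) e r" for y
  proof -
    have "(y \<bullet> e i)\<^sup>2 \<le> (r i)\<^sup>2" if i: "i \<in> {1..DIM('a)}" for i
    proof -
      have "\<bar>y \<bullet> e i\<bar>\<^sup>2 / (r i)\<^sup>2 \<le> (\<Sum>i\<in>{1..DIM('a)}. \<bar>y \<bullet> e i\<bar>\<^sup>2 / (r i)\<^sup>2)"
        using i by (intro member_le_sum) auto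
      also have "\<dots> \<le> 1"
        using y by (simp add: ellipsoid_def)
      finally show ?thesis
        using r_pos[OF i] by (simp add: divide_le_eq)
    qed
    then have "(norm y)\<^sup>2 \<le> (\<Sum>i\<in>{1..DIM('a)}. (r i)\<^sup>2)"
      unfolding orthonormal_family_parseval[OF onf] by (rule sum_mono)
    then show ?thesis
      by (rule real_le_rsqrt)
  qed
  then show ?thesis
    unfolding bounded_iff by blast
qed

lemma support_fun_ellipsoid_ge:
  fixes e :: "nat \<Rightarrow> 'a::euclidean_space"
  assumes onf: "orthonormal_family DIM('a) e"
    and r_pos: "\<And>i. i \<in> {1..DIM('a)} \<Longrightarrow> 0 < r i"
    and l: "l \<in> {1..DIM('a)}"
  shows "r l * \<bar>x \<bullet> e l\<bar> \<le> support_fun (ellipsoid DIM('a) e r) x"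
proof -
  define y where "y = (r l * sgn (x \<bullet> e l)) *\<^sub>R e l"
  have r_l: "0 < r l"
    using r_pos[OF l] .
  have "y \<bullet> e i = (if i = l then r l * sgn (x \<bullet> e l) else 0)" if "i \<in> {1..DIM('a)}" for i
    using that l unfolding y_def by (simp add: orthonormal_family_inner[OF onf] inner_commute)
  then have "(\<Sum>i\<in>{1..DIM('a)}. \<bar>y \<bullet> e i\<bar>\<^sup>2 / (r i)\<^sup>2)
      = (\<Sum>i\<in>{1..DIM('a)}. if i = l then (sgn (x \<bullet> e l))\<^sup>2 else 0)"
    using r_l by (intro sum.cong) (auto simp: power_mult_distrib abs_mult)
  also have "\<dots> \<le> 1"
    using l by (simp add: sgn_if)
  finally have "y \<in> ellipsoid DIM('a) e r"
    by (simp add: ellipsoid_def)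
  then have "y \<bullet> x \<le> support_fun (ellipsoid DIM('a) e r) x"
    using onf r_pos by (intro support_fun_ge bounded_ellipsoid)
  moreover have "y \<bullet> x = r l * \<bar>x \<bullet> e l\<bar>"
    unfolding y_def by (simp add: inner_commute abs_sgn mult.assoc)
  ultimately show ?thesis
    by simp
qed

lemma support_fun_ellipsoid_pos:
  fixes e :: "nat \<Rightarrow> 'a::euclidean_space"
  assumes onf: "orthonormal_family DIM('a) e"
    and r_pos: "\<And>i. i \<in> {1..DIM('a)} \<Longrightarrow> 0 < r i"
    and "x \<noteq> 0"
  shows "0 < support_fun (ellipsoid DIM('a) e r) x"
proof -
  obtain l where l: "l \<in> {1..DIM('a)}" "x \<bullet> e l \<noteq> 0"
  proof (rule ccontr)
    assume "\<not> thesis"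
    with that have "x = (\<Sum>l\<in>{1..DIM('a)}. (x \<bullet> e l) *\<^sub>R e l)" "\<forall>l\<in>{1..DIM('a)}. x \<bullet> e l = 0"
      using orthonormal_family_expansion[OF onf] by blast+
    with \<open>x \<noteq> 0\<close> show False
      by simp
  qed
  have "0 < r l * \<bar>x \<bullet> e l\<bar>"
    using r_pos[OF l(1)] l(2) by simp
  also have "\<dots> \<le> support_fun (ellipsoid DIM('a) e r) x"
    by (rule support_fun_ellipsoid_ge[OF onf r_pos l(1)])
  finally show ?thesis .
qed

lemma continuous_on_ln_support_fun_ellipsoid:
  fixes e :: "nat \<Rightarrow> 'a::euclidean_space"
  assumes onf: "orthonormal_family DIM('a) e"
    and r_pos: "\<And>i. i \<in> {1..DIM('a)} \<Longrightarrow> 0 < r i"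
  shows "continuous_on (sphere 0 1) (\<lambda>x. ln (support_fun (ellipsoid DIM('a) e r) x))"
proof (rule continuous_on_ln)
  have "ellipsoid DIM('a) e r \<noteq> {}"
    by (auto simp: ellipsoid_def intro!: exI[of _ 0])
  then have "continuous_on UNIV (support_fun (ellipsoid DIM('a) e r))"
    by (intro convex_on_continuous convex_on_support_fun bounded_ellipsoid[OF onf r_pos]) auto
  then show "continuous_on (sphere 0 1) (support_fun (ellipsoid DIM('a) e r))"
    by (rule continuous_on_subset) auto
  have "0 < support_fun (ellipsoid DIM('a) e r) x" if "x \<in> sphere 0 1" for x
    using that by (intro support_fun_ellipsoid_pos[OF onf r_pos]) auto
  then show "\<forall>x\<in>sphere 0 1. support_fun (ellipsoid DIM('a) e r) x \<noteq> 0"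
    by fastforce
qed

definition slab :: "nat \<Rightarrow> (nat \<Rightarrow> 'a::real_inner) \<Rightarrow> nat \<Rightarrow> real \<Rightarrow> 'a set" where
  "slab n e i \<rho> = {x \<in> sphere 0 1. \<forall>l\<in>{Suc i..n}. \<bar>x \<bullet> e l\<bar> \<le> \<rho>}"

lemma closed_slab:
  fixes e :: "nat \<Rightarrow> 'a::euclidean_space"
  shows "closed (slab n e i \<rho>)"
proof -
  have "slab n e i \<rho> = sphere 0 1 \<inter> (\<Inter>l\<in>{Suc i..n}. {x. \<bar>x \<bullet> e l\<bar> \<le> \<rho>})"
    unfolding slab_def by auto
  then show ?thesis
    by (simp add: closed_Int closed_INT closed_Collect_le continuous_intros)
qed

lemma slab_mono: "\<rho> \<le> \<rho>' \<Longrightarrow> slab n e i \<rho> \<subseteq> slab n e i \<rho>'"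
  unfolding slab_def by force

lemma forall_abs_le_inverse_Suc_iff: "(\<forall>k::nat. \<bar>a\<bar> \<le> 1 / (real k + 1)) \<longleftrightarrow> a = (0::real)"
proof
  assume small: "\<forall>k::nat. \<bar>a\<bar> \<le> 1 / (real k + 1)"
  show "a = 0"
  proof (rule ccontr)
    assume "a \<noteq> 0"
    then obtain k where "inverse (real (Suc k)) < \<bar>a\<bar>"
      using reals_Archimedean[of "\<bar>a\<bar>"] by auto
    with small show False
      by (auto simp: inverse_eq_divide add.commute not_le[symmetric])
  qed
qed simp

lemma Inter_slab:
  fixes e :: "nat \<Rightarrow> 'a::euclidean_space"
  assumes "orthonormal_family DIM('a) e" "i \<le> DIM('a)"
  shows "(\<Inter>k. slab DIM('a) e i (1 / (real k + 1))) = span (e ` {1..i}) \<inter> sphere 0 1"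
proof (rule set_eqI)
  fix x
  have "x \<in> (\<Inter>k. slab DIM('a) e i (1 / (real k + 1)))
      \<longleftrightarrow> norm x = 1 \<and> (\<forall>l\<in>{Suc i..DIM('a)}. \<forall>k::nat. \<bar>x \<bullet> e l\<bar> \<le> 1 / (real k + 1))"
    unfolding slab_def by auto
  also have "\<dots> \<longleftrightarrow> norm x = 1 \<and> (\<forall>l\<in>{Suc i..DIM('a)}. x \<bullet> e l = 0)"
    by (simp add: forall_abs_le_inverse_Suc_iff)
  also have "\<dots> \<longleftrightarrow> x \<in> span (e ` {1..i}) \<inter> sphere 0 1"
    using span_orthonormal_prefix_iff[OF assms] by auto
  finally show "x \<in> (\<Inter>k. slab DIM('a) e i (1 / (real k + 1))) \<longleftrightarrow> x \<in> span (e ` {1..i}) \<inter> sphere 0 1" .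
qed

lemma tendsto_measure_slab:
  fixes e :: "nat \<Rightarrow> 'a::euclidean_space" and \<mu> :: "'a measure"
  assumes "orthonormal_family DIM('a) e" "i \<le> DIM('a)"
    and "finite_measure \<mu>" "sets \<mu> = sets borel"
  shows "(\<lambda>k. measure \<mu> (slab DIM('a) e i (1 / (real k + 1))))
           \<longlonglongrightarrow> measure \<mu> (span (e ` {1..i}) \<inter> sphere 0 1)"
proof -
  have "(\<lambda>k. measure \<mu> (slab DIM('a) e i (1 / (real k + 1))))
          \<longlonglongrightarrow> measure \<mu> (\<Inter>k. slab DIM('a) e i (1 / (real k + 1)))"
  proof (rule Lim_measure_decseq)
    show "range (\<lambda>k. slab DIM('a) e i (1 / (real k + 1))) \<subseteq> sets \<mu>"
      using assms(4) by (auto intro: borel_closed closed_slab)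
    show "decseq (\<lambda>k. slab DIM('a) e i (1 / (real k + 1)))"
      by (rule decseq_SucI, rule slab_mono) (simp add: frac_le)
    show "emeasure \<mu> (slab DIM('a) e i (1 / (real k + 1))) \<noteq> \<infinity>" for k
      using finite_measure.emeasure_finite[OF assms(3)] by simp
  qed
  then show ?thesis
    unfolding Inter_slab[OF assms(1,2)] .
qed

lemma mem_slab_perturbed:
  fixes e e' :: "nat \<Rightarrow> 'a::real_inner"
  assumes x: "x \<in> slab n e i \<delta>" and y: "norm y = 1" and xy: "dist x y \<le> a"
    and e': "orthonormal_family n e'" and ee': "\<And>l. l \<in> {Suc i..n} \<Longrightarrow> dist (e l) (e' l) \<le> b"
  shows "y \<in> slab n e' i (\<delta> + a + b)"
proof -
  have "\<bar>y \<bullet> e' l\<bar> \<le> \<delta> + a + b" if l: "l \<in> {Suc i..n}" for l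
  proof -
    have "y \<bullet> e' l = (y - x) \<bullet> e' l + x \<bullet> (e' l - e l) + x \<bullet> e l"
      by (simp add: inner_diff_left inner_diff_right)
    moreover have "\<bar>(y - x) \<bullet> e' l\<bar> \<le> a"
      using Cauchy_Schwarz_ineq2[of "y - x" "e' l"] orthonormal_family_norm[OF e', of l] l xy
      by (simp add: dist_norm norm_minus_commute)
    moreover have "\<bar>x \<bullet> (e' l - e l)\<bar> \<le> b"
      using Cauchy_Schwarz_ineq2[of x "e' l - e l"] x ee'[OF l]
      by (simp add: slab_def dist_norm norm_minus_commute)
    moreover have "\<bar>x \<bullet> e l\<bar> \<le> \<delta>"
      using x l by (simp add: slab_def)
    ultimately show ?thesis
      by linarith
  qed
  with y show ?thesis
    by (simp add: slab_def)
qed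

lemma exists_coordinate_gt:
  fixes e :: "nat \<Rightarrow> 'a::euclidean_space"
  assumes onf: "orthonormal_family DIM('a) e"
    and \<delta>: "real DIM('a) * \<delta>\<^sup>2 < 1" and x: "norm x = 1"
  shows "\<exists>l\<in>{1..DIM('a)}. \<delta> < \<bar>x \<bullet> e l\<bar>"
proof (rule ccontr)
  assume "\<not> ?thesis"
  then have "\<bar>x \<bullet> e l\<bar> \<le> \<delta>" if "l \<in> {1..DIM('a)}" for l
    using that by (simp add: not_less)
  then have "(x \<bullet> e l)\<^sup>2 \<le> \<delta>\<^sup>2" if "l \<in> {1..DIM('a)}" for l
    using that by (metis abs_ge_zero power2_abs power_mono)
  then have "(\<Sum>l\<in>{1..DIM('a)}. (x \<bullet> e l)\<^sup>2) \<le> real DIM('a) * \<delta>\<^sup>2"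
    using sum_mono[of "{1..DIM('a)}" "\<lambda>l. (x \<bullet> e l)\<^sup>2" "\<lambda>_. \<delta>\<^sup>2"] by simp
  with \<delta> x show False
    unfolding orthonormal_family_parseval[OF onf, symmetric] by simp
qed

lemma exists_last_coordinate_gt:
  fixes e :: "nat \<Rightarrow> 'a::euclidean_space"
  assumes onf: "orthonormal_family DIM('a) e"
    and \<delta>: "real DIM('a) * \<delta>\<^sup>2 < 1" and x: "norm x = 1"
  obtains j where "j \<in> {1..DIM('a)}" "\<delta> < \<bar>x \<bullet> e j\<bar>"
    and "\<And>l. l \<in> {Suc j..DIM('a)} \<Longrightarrow> \<bar>x \<bullet> e l\<bar> \<le> \<delta>"
proof -
  define L where "L = {l \<in> {1..DIM('a)}. \<delta> < \<bar>x \<bullet> e l\<bar>}"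
  have "finite L" "L \<noteq> {}"
    using exists_coordinate_gt[OF onf \<delta> x] unfolding L_def by auto
  then have j: "Max L \<in> L" and j_max: "\<And>l. l \<in> L \<Longrightarrow> l \<le> Max L"
    by auto
  show thesis
  proof (rule that)
    show "Max L \<in> {1..DIM('a)}" "\<delta> < \<bar>x \<bullet> e (Max L)\<bar>"
      using j unfolding L_def by auto
    show "\<bar>x \<bullet> e l\<bar> \<le> \<delta>" if l: "l \<in> {Suc (Max L)..DIM('a)}" for l
    proof (rule ccontr)
      assume "\<not> \<bar>x \<bullet> e l\<bar> \<le> \<delta>"
      then have "l \<in> L"
        using l unfolding L_def by auto
      with j_max[of l] l show False
        by simp
    qed
  qed
qed

lemma sum_tail_increments:
  fixes f :: "nat \<Rightarrow> real"
  assumes "1 \<le> j" "j \<le> n"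
  shows "(\<Sum>i\<in>{1..<n}. if i \<in> {j..<n} then f (Suc i) - f i else 0) = f n - f j"
proof -
  have "(\<Sum>i\<in>{1..<n}. if i \<in> {j..<n} then f (Suc i) - f i else 0)
      = (\<Sum>i\<in>{1..<n} \<inter> {j..<n}. f (Suc i) - f i)"
    by (rule sum.inter_restrict[symmetric]) simp
  also have "{1..<n} \<inter> {j..<n} = {j..<n}"
    using assms by auto
  finally show ?thesis
    using sum_Suc_diff'[OF assms(2)] by simp
qed

lemma ln_support_fun_ellipsoid_ge:
  fixes e :: "nat \<Rightarrow> 'a::euclidean_space"
  defines "n \<equiv> DIM('a)"
  assumes onf: "orthonormal_family n e"
    and r_pos: "\<And>i. i \<in> {1..n} \<Longrightarrow> 0 < r i"
    and \<delta>: "0 < \<delta>" "real n * \<delta>\<^sup>2 < 1" and x: "norm x = 1"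
  shows "ln \<delta> + ln (r n)
           - (\<Sum>i\<in>{1..<n}. (ln (r (Suc i)) - ln (r i)) * indicator (slab n e i \<delta>) x)
         \<le> ln (support_fun (ellipsoid n e r) x)"
proof -
  obtain j where j: "j \<in> {1..n}" "\<delta> < \<bar>x \<bullet> e j\<bar>"
    and j_last: "\<And>l. l \<in> {Suc j..n} \<Longrightarrow> \<bar>x \<bullet> e l\<bar> \<le> \<delta>"
    using exists_last_coordinate_gt[OF onf[unfolded n_def] \<delta>(2)[unfolded n_def] x]
    unfolding n_def by blast
  have j_range: "1 \<le> j" "j \<le> n"
    using j(1) by auto
  have slab_iff: "x \<in> slab n e i \<delta> \<longleftrightarrow> i \<in> {j..<n}" if i: "i \<in> {1..<n}" for i
  proof
    assume x_slab: "x \<in> slab n e i \<delta>"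
    show "i \<in> {j..<n}"
    proof (rule ccontr)
      assume "i \<notin> {j..<n}"
      then have "j \<in> {Suc i..n}"
        using i j(1) by auto
      with x_slab j(2) show False
        unfolding slab_def by force
    qed
  next
    assume "i \<in> {j..<n}"
    then show "x \<in> slab n e i \<delta>"
      using x j_last unfolding slab_def by auto
  qed
  have "(\<Sum>i\<in>{1..<n}. (ln (r (Suc i)) - ln (r i)) * indicator (slab n e i \<delta>) x)
      = (\<Sum>i\<in>{1..<n}. if i \<in> {j..<n} then ln (r (Suc i)) - ln (r i) else 0)"
    by (intro sum.cong) (auto simp: slab_iff)
  also have "\<dots> = ln (r n) - ln (r j)"
    by (rule sum_tail_increments[OF j_range])
  finally have telescope: "(\<Sum>i\<in>{1..<n}. (ln (r (Suc i)) - ln (r i)) * indicator (slab n e i \<delta>) x)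
      = ln (r n) - ln (r j)" .
  have r_j: "0 < r j"
    using r_pos j_range by simp
  have "r j * \<delta> \<le> r j * \<bar>x \<bullet> e j\<bar>"
    using j(2) r_j by simp
  also have "\<dots> \<le> support_fun (ellipsoid n e r) x"
    unfolding n_def
    by (rule support_fun_ellipsoid_ge[OF onf[unfolded n_def]]) (use r_pos j_range in \<open>auto simp: n_def\<close>)
  finally have "ln (r j * \<delta>) \<le> ln (support_fun (ellipsoid n e r) x)"
    using r_j \<delta>(1) by (intro ln_mono) auto
  then show ?thesis
    unfolding telescope using r_j \<delta>(1) by (simp add: ln_mult)
qed

lemma discrete_measure_eq_distr:
  "discrete_measure N v w = distr (point_measure {1..N} (\<lambda>i. ennreal (w i))) borel v"
proof -
  let ?D = "distr (point_measure {1..N} (\<lambda>i. ennreal (w i))) borel v"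
  have "?D = measure_of UNIV (sets borel) (emeasure ?D)"
    using measure_of_of_measure[of ?D] by simp
  also have "\<dots> = discrete_measure N v w"
    unfolding discrete_measure_def
  proof (rule measure_of_eq)
    fix A :: "'a set" assume "A \<in> sigma_sets UNIV (sets borel)"
    then have "A \<in> sets borel"
      using sets.sigma_sets_eq[of "borel :: 'a measure"] by simp
    then have "emeasure ?D A = emeasure (point_measure {1..N} (\<lambda>i. ennreal (w i))) (v -` A \<inter> {1..N})"
      by (simp add: emeasure_distr space_point_measure)
    also have "\<dots> = (\<Sum>i\<in>v -` A \<inter> {1..N}. ennreal (w i))"
      by (rule emeasure_point_measure_finite) auto
    also have "\<dots> = (\<Sum>i\<in>{1..N} \<inter> {i. v i \<in> A}. ennreal (w i))"
      by (rule sum.cong) auto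
    also have "\<dots> = (\<Sum>i\<in>{1..N}. ennreal (w i) * indicator A (v i))"
      by (auto simp: sum.inter_restrict indicator_def of_bool_def intro!: sum.cong)
    finally show "emeasure ?D A = (\<Sum>i\<in>{1..N}. ennreal (w i) * indicator A (v i))" .
  qed simp
  finally show ?thesis ..
qed

lemma sets_discrete_measure [simp]: "sets (discrete_measure N v w) = sets borel"
  by (simp add: discrete_measure_eq_distr)

lemma integral_discrete_measure:
  assumes "f \<in> borel_measurable borel" and "\<And>i. i \<in> {1..N} \<Longrightarrow> 0 \<le> w i"
  shows "integral\<^sup>L (discrete_measure N v w) f = (\<Sum>i\<in>{1..N}. w i * f (v i))"
proof -
  have "integral\<^sup>L (discrete_measure N v w) f
      = integral\<^sup>L (point_measure {1..N} (\<lambda>i. ennreal (w i))) (\<lambda>i. f (v i))"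
    unfolding discrete_measure_eq_distr by (intro integral_distr) (simp_all add: assms(1))
  also have "\<dots> = (\<Sum>i\<in>{1..N}. w i * f (v i))"
    using assms(2) by (subst lebesgue_integral_point_measure_finite) auto
  finally show ?thesis .
qed

lemma measure_discrete_measure:
  assumes "A \<in> sets borel" and "\<And>i. i \<in> {1..N} \<Longrightarrow> 0 \<le> w i"
  shows "measure (discrete_measure N v w) A = (\<Sum>i\<in>{1..N}. w i * indicator A (v i))"
  using integral_discrete_measure[of "indicator A" N w v] assms by simp

lemma total_mass_discrete_measure:
  assumes "\<And>i. i \<in> {1..N} \<Longrightarrow> 0 \<le> w i"
  shows "total_mass (discrete_measure N v w) = (\<Sum>i\<in>{1..N}. w i)"
  using measure_discrete_measure[of UNIV N w v] assms
  by (simp add: total_mass_def discrete_measure_eq_distr)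

lemma sum_discrete_measure_affine_indicators:
  assumes "\<And>i. i \<in> I \<Longrightarrow> A i \<in> sets borel" and "\<And>j. j \<in> {1..N} \<Longrightarrow> 0 \<le> w j"
  shows "(\<Sum>j\<in>{1..N}. w j * (c - (\<Sum>i\<in>I. d i * indicator (A i) (v j))))
    = total_mass (discrete_measure N v w) * c - (\<Sum>i\<in>I. d i * measure (discrete_measure N v w) (A i))"
proof -
  have "(\<Sum>j\<in>{1..N}. w j * (c - (\<Sum>i\<in>I. d i * indicator (A i) (v j))))
      = (\<Sum>j\<in>{1..N}. w j) * c - (\<Sum>j\<in>{1..N}. \<Sum>i\<in>I. d i * (w j * indicator (A i) (v j)))"
    by (simp add: right_diff_distrib sum_subtractf sum_distrib_left sum_distrib_right mult.left_commute)
  also have "\<dots> = (\<Sum>j\<in>{1..N}. w j) * c - (\<Sum>i\<in>I. d i * (\<Sum>j\<in>{1..N}. w j * indicator (A i) (v j)))"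
    by (subst sum.swap) (simp only: sum_distrib_left)
  also have "(\<Sum>j\<in>{1..N}. w j) = total_mass (discrete_measure N v w)"
    by (rule total_mass_discrete_measure[symmetric]) (use assms(2) in auto)
  also have "(\<Sum>i\<in>I. d i * (\<Sum>j\<in>{1..N}. w j * indicator (A i) (v j)))
      = (\<Sum>i\<in>I. d i * measure (discrete_measure N v w) (A i))"
  proof (rule sum.cong)
    fix i assume "i \<in> I"
    then have "(\<Sum>j\<in>{1..N}. w j * indicator (A i) (v j)) = measure (discrete_measure N v w) (A i)"
      by (intro measure_discrete_measure[symmetric]) (use assms in auto)
    then show "d i * (\<Sum>j\<in>{1..N}. w j * indicator (A i) (v j)) = d i * measure (discrete_measure N v w) (A i)"
      by simp
  qed simp
  finally show ?thesis .
qed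

lemma scale_discrete_measure:
  assumes "0 \<le> c" and "\<And>i. i \<in> {1..N} \<Longrightarrow> 0 \<le> w i"
  shows "scale_measure (ennreal c) (discrete_measure N v w) = discrete_measure N v (\<lambda>i. c * w i)"
proof (rule measure_eqI)
  fix A assume "A \<in> sets (scale_measure (ennreal c) (discrete_measure N v w))"
  then have A: "A \<in> sets borel"
    by simp
  have emeasure: "emeasure (discrete_measure N v w') A = (\<Sum>i\<in>v -` A \<inter> {1..N}. ennreal (w' i))"
    for w' :: "nat \<Rightarrow> real"
    using A by (simp add: discrete_measure_eq_distr emeasure_distr space_point_measure
        emeasure_point_measure_finite)
  have "ennreal c * (\<Sum>i\<in>v -` A \<inter> {1..N}. ennreal (w i)) = (\<Sum>i\<in>v -` A \<inter> {1..N}. ennreal (c * w i))"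
    using assms by (auto simp: sum_distrib_left ennreal_mult intro!: sum.cong)
  then show "emeasure (scale_measure (ennreal c) (discrete_measure N v w)) A
      = emeasure (discrete_measure N v (\<lambda>i. c * w i)) A"
    by (simp add: emeasure)
qed simp

lemma total_mass_eq_measure_sphere:
  fixes \<mu> :: "'a::euclidean_space measure"
  assumes "sets \<mu> = sets borel" "finite_measure \<mu>" "emeasure \<mu> (- sphere 0 1) = 0"
  shows "total_mass \<mu> = measure \<mu> (sphere 0 1)"
proof -
  have space: "space \<mu> = UNIV"
    using sets_eq_imp_space_eq[OF assms(1)] by simp
  have "sphere 0 1 \<in> sets \<mu>"
    using assms(1) by (simp add: borel_closed)
  then have "measure \<mu> (space \<mu> - sphere 0 1) = measure \<mu> (space \<mu>) - measure \<mu> (sphere 0 1)"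
    by (rule finite_measure.finite_measure_compl[OF assms(2)])
  moreover have "measure \<mu> (- sphere 0 1) = 0"
    using assms(3) by (simp add: measure_def)
  ultimately show ?thesis
    unfolding total_mass_def space by (simp add: Compl_eq_Diff_UNIV)
qed

lemma measure_UN_sphere_partition:
  assumes part: "sphere_partition m N U" and "sets \<mu> = sets borel" "finite_measure \<mu>"
    and J: "J \<subseteq> {1..N}"
  shows "measure \<mu> (\<Union>j\<in>J. U j) = (\<Sum>j\<in>J. measure \<mu> (U j))"
proof (rule measure_finite_Union)
  show "finite J"
    using J finite_subset by blast
  show "U ` J \<subseteq> sets \<mu>"
    using J part assms(2) unfolding sphere_partition_def by auto
  show "disjoint_family_on U J"
    using J part unfolding sphere_partition_def disjoint_family_on_def by blast
  show "emeasure \<mu> (U j) \<noteq> \<infinity>" for j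
    using finite_measure.emeasure_finite[OF assms(3)] by simp
qed

lemma sum_approx_measure_weights:
  assumes part: "sphere_partition m N U"
    and \<mu>: "sets \<mu> = sets borel" "finite_measure \<mu>" "emeasure \<mu> (- sphere 0 1) = 0"
  shows "(\<Sum>j\<in>{1..N}. measure \<mu> (U j) + 1 / (real N)\<^sup>2) = total_mass \<mu> + 1 / real N"
proof -
  have "(\<Sum>j\<in>{1..N}. measure \<mu> (U j)) = total_mass \<mu>"
    using measure_UN_sphere_partition[OF part \<mu>(1,2), of "{1..N}"] part
      total_mass_eq_measure_sphere[OF \<mu>]
    unfolding sphere_partition_def by simp
  then show ?thesis
    by (simp add: sum.distrib power2_eq_square)
qed

lemma approx_measure_normalized_eq:
  fixes \<mu> :: "'a::euclidean_space measure" and N :: nat and U :: "nat \<Rightarrow> 'a set"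
  defines "w \<equiv> \<lambda>j. measure \<mu> (U j) + 1 / (real N)\<^sup>2"
  shows "approx_measure_normalized \<mu> N U v
    = discrete_measure N v (\<lambda>j. total_mass \<mu> / (\<Sum>j\<in>{1..N}. w j) * w j)"
proof -
  have w: "0 \<le> w j" for j
    unfolding w_def by simp
  have "total_mass (approx_measure \<mu> N U v) = (\<Sum>j\<in>{1..N}. w j)"
    unfolding approx_measure_def w_def by (rule total_mass_discrete_measure) simp
  moreover have "0 \<le> total_mass \<mu> / (\<Sum>j\<in>{1..N}. w j)"
    unfolding total_mass_def using w by (simp add: sum_nonneg)
  ultimately show ?thesis
    unfolding approx_measure_normalized_def
    by (simp add: approx_measure_def w_def[symmetric] scale_discrete_measure w)
qed

lemma approx_measure_normalized_discrete:
  fixes \<mu> :: "'a::euclidean_space measure"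
  obtains p where "approx_measure_normalized \<mu> N U v = discrete_measure N v p" "\<And>j. 0 \<le> p j"
  by (rule that[OF approx_measure_normalized_eq]) (simp add: total_mass_def sum_nonneg)

(* No hypothesis on N is needed: for N = 0 the junk value 1 / real 0 = 0 makes the factor P / P. *)
lemma normalizing_factor:
  fixes P :: real
  assumes "0 \<le> P"
  shows "0 \<le> P / (P + 1 / real N)" "P / (P + 1 / real N) \<le> 1"
    and "P / (P + 1 / real N) * (P + 1 / real N) = P"
proof -
  have "0 < P + 1 / real N \<or> (N = 0 \<and> P + 1 / real N = P)"
    using assms by (cases "N = 0") (auto intro: add_nonneg_pos)
  then show "0 \<le> P / (P + 1 / real N)" "P / (P + 1 / real N) \<le> 1"
    and "P / (P + 1 / real N) * (P + 1 / real N) = P"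
    using assms by auto
qed

lemma total_mass_approx_measure_normalized:
  assumes part: "sphere_partition m N U"
    and \<mu>: "sets \<mu> = sets borel" "finite_measure \<mu>" "emeasure \<mu> (- sphere 0 1) = 0"
  shows "total_mass (approx_measure_normalized \<mu> N U v) = total_mass \<mu>"
proof -
  define w where "w j = measure \<mu> (U j) + 1 / (real N)\<^sup>2" for j
  define c where "c = total_mass \<mu> / (total_mass \<mu> + 1 / real N)"
  have "0 \<le> total_mass \<mu>"
    by (simp add: total_mass_def)
  have "approx_measure_normalized \<mu> N U v = discrete_measure N v (\<lambda>j. c * w j)"
    unfolding approx_measure_normalized_eq sum_approx_measure_weights[OF part \<mu>] c_def w_def ..
  then have "total_mass (approx_measure_normalized \<mu> N U v) = (\<Sum>j\<in>{1..N}. c * w j)"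
    using \<open>0 \<le> total_mass \<mu>\<close> normalizing_factor(1)
    by (simp add: total_mass_discrete_measure w_def c_def)
  also have "\<dots> = c * (total_mass \<mu> + 1 / real N)"
    unfolding sum_distrib_left[symmetric] w_def sum_approx_measure_weights[OF part \<mu>] ..
  also have "\<dots> = total_mass \<mu>"
    unfolding c_def using \<open>0 \<le> total_mass \<mu>\<close> by (rule normalizing_factor)
  finally show ?thesis .
qed

lemma measure_approx_measure_normalized_le:
  assumes part: "sphere_partition m N U"
    and \<mu>: "sets \<mu> = sets borel" "finite_measure \<mu>" "emeasure \<mu> (- sphere 0 1) = 0"
    and A: "A \<in> sets borel" and B: "B \<in> sets borel"
    and AB: "\<And>j. j \<in> {1..N} \<Longrightarrow> v j \<in> A \<Longrightarrow> U j \<subseteq> B"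
  shows "measure (approx_measure_normalized \<mu> N U v) A \<le> measure \<mu> B + 1 / real N"
proof -
  define w where "w j = measure \<mu> (U j) + 1 / (real N)\<^sup>2" for j
  define c where "c = total_mass \<mu> / (total_mass \<mu> + 1 / real N)"
  define J where "J = {j \<in> {1..N}. v j \<in> A}"
  have w: "0 \<le> w j" for j
    unfolding w_def by simp
  have "0 \<le> total_mass \<mu>"
    by (simp add: total_mass_def)
  then have c: "0 \<le> c" "c \<le> 1"
    unfolding c_def by (rule normalizing_factor)+
  have J: "J \<subseteq> {1..N}"
    unfolding J_def by auto
  have "measure (approx_measure_normalized \<mu> N U v) A = (\<Sum>j\<in>{1..N}. c * w j * indicator A (v j))"
    unfolding approx_measure_normalized_eq w_def[symmetric] sum_approx_measure_weights[OF part \<mu>, folded w_def]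
      c_def[symmetric]
    using A c w by (subst measure_discrete_measure) auto
  also have "\<dots> = (\<Sum>j\<in>{1..N}. if v j \<in> A then c * w j else 0)"
    by (intro sum.cong) (auto simp: indicator_def)
  also have "\<dots> = (\<Sum>j\<in>J. c * w j)"
    unfolding J_def by (rule sum.inter_filter[symmetric]) simp
  also have "\<dots> \<le> (\<Sum>j\<in>J. w j)"
    using c w by (intro sum_mono mult_left_le_one_le) auto
  also have "\<dots> = measure \<mu> (\<Union>j\<in>J. U j) + real (card J) * (1 / (real N)\<^sup>2)"
    unfolding w_def measure_UN_sphere_partition[OF part \<mu>(1,2) J] by (simp add: sum.distrib)
  also have "\<dots> \<le> measure \<mu> B + real N * (1 / (real N)\<^sup>2)"
  proof (intro add_mono mult_right_mono)
    show "measure \<mu> (\<Union>j\<in>J. U j) \<le> measure \<mu> B"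
      using AB B \<mu>(1) unfolding J_def
      by (intro finite_measure.finite_measure_mono[OF \<mu>(2)]) auto
    show "real (card J) \<le> real N"
      using card_mono[OF _ J] by simp
  qed simp
  also have "\<dots> = measure \<mu> B + 1 / real N"
    by (simp add: power2_eq_square)
  finally show ?thesis .
qed

lemma sphere_separated_points:
  assumes "2 \<le> DIM('a)" and m: "1 \<le> m"
  obtains p :: "nat \<Rightarrow> 'a::euclidean_space"
  where "\<And>k. k \<le> m \<Longrightarrow> p k \<in> sphere 0 1"
    and "\<And>k l. k \<le> m \<Longrightarrow> l \<le> m \<Longrightarrow> k \<noteq> l \<Longrightarrow> 1 / real m \<le> dist (p k) (p l)"
proof -
  obtain b1 :: 'a where b1: "b1 \<in> Basis"
    using nonempty_Basis by blast
  have "\<not> Basis \<subseteq> {b1}"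
  proof
    assume "Basis \<subseteq> {b1}"
    then have "DIM('a) \<le> 1"
      using card_mono[of "{b1}" Basis] by simp
    with assms(1) show False
      by simp
  qed
  then obtain b2 where b: "b1 \<in> Basis" "b2 \<in> Basis" "b1 \<noteq> b2"
    using b1 by blast
  have inner_b: "b1 \<bullet> b1 = 1" "b2 \<bullet> b2 = 1" "b1 \<bullet> b2 = 0" "b2 \<bullet> b1 = 0"
    using b by (simp_all add: inner_Basis)
  define a where "a k = real k / real m" for k
  define p where "p k = a k *\<^sub>R b1 + sqrt (1 - (a k)\<^sup>2) *\<^sub>R b2" for k
  have "p k \<in> sphere 0 1" if "k \<le> m" for k
  proof -
    have "0 \<le> a k" "a k \<le> 1"
      using that m unfolding a_def by auto
    then have "(sqrt (1 - (a k)\<^sup>2))\<^sup>2 = 1 - (a k)\<^sup>2"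
      by (simp add: power_le_one)
    then have "p k \<bullet> p k = 1"
      unfolding p_def by (simp add: inner_add_left inner_add_right inner_b power2_eq_square)
    then show ?thesis
      by (simp add: norm_eq_1)
  qed
  moreover have "1 / real m \<le> dist (p k) (p l)" if "k \<noteq> l" for k l
  proof -
    have "1 / real m \<le> \<bar>real k - real l\<bar> / real m"
      using that by (intro divide_right_mono) auto
    also have "\<dots> = \<bar>(p k - p l) \<bullet> b1\<bar>"
      unfolding p_def a_def
      by (simp add: inner_diff_left inner_add_left inner_b diff_divide_distrib[symmetric])
    also have "\<dots> \<le> dist (p k) (p l)"
      unfolding dist_norm by (rule Basis_le_norm[OF b(1)])
    finally show ?thesis .
  qed
  ultimately show ?thesis
    using that by blast
qed

lemma sphere_partition_card_gt:
  fixes U :: "nat \<Rightarrow> 'a::euclidean_space set"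
  assumes part: "sphere_partition m N U" and "2 \<le> DIM('a)" "1 \<le> m"
  shows "m < N"
proof -
  obtain p :: "nat \<Rightarrow> 'a" where p_sphere: "\<And>k. k \<le> m \<Longrightarrow> p k \<in> sphere 0 1"
    and p_sep: "\<And>k l. k \<le> m \<Longrightarrow> l \<le> m \<Longrightarrow> k \<noteq> l \<Longrightarrow> 1 / real m \<le> dist (p k) (p l)"
    using sphere_separated_points[OF assms(2,3)] by blast
  have "\<forall>k\<in>{0..m}. \<exists>j\<in>{1..N}. p k \<in> U j"
    using p_sphere part unfolding sphere_partition_def by auto
  then obtain J where J: "\<And>k. k \<in> {0..m} \<Longrightarrow> J k \<in> {1..N} \<and> p k \<in> U (J k)"
    by metis
  have "inj_on J {0..m}"
  proof (rule inj_onI, rule ccontr)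
    fix k l assume kl: "k \<in> {0..m}" "l \<in> {0..m}" "J k = J l" "k \<noteq> l"
    have piece: "U (J k) \<subseteq> sphere 0 1" "diameter (U (J k)) < 1 / real m"
      using J[OF kl(1)] part unfolding sphere_partition_def by auto
    have "dist (p k) (p l) \<le> diameter (U (J k))"
      using J[OF kl(1)] J[OF kl(2)] kl(3) piece(1)
      by (intro diameter_bounded_bound) (auto intro: bounded_subset[OF bounded_sphere])
    with piece(2) p_sep[of k l] kl show False
      by simp
  qed
  then have "card {0..m} \<le> card {1..N}"
    by (rule card_inj_on_le) (use J in auto)
  then show ?thesis
    by simp
qed

lemma sphere_partition_piece_subset_slab:
  fixes U :: "nat \<Rightarrow> 'a::euclidean_space set"
  assumes part: "sphere_partition m N U" and j: "j \<in> {1..N}" and v: "v \<in> U j" "v \<in> slab n e i \<delta>"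
    and e0: "orthonormal_family n e0" and ee0: "\<And>l. l \<in> {Suc i..n} \<Longrightarrow> dist (e l) (e0 l) \<le> b"
  shows "U j \<subseteq> slab n e0 i (\<delta> + 1 / real m + b)"
proof
  fix y assume y: "y \<in> U j"
  have piece: "U j \<subseteq> sphere 0 1" "diameter (U j) < 1 / real m"
    using part j unfolding sphere_partition_def by auto
  have "dist v y \<le> diameter (U j)"
    using v(1) y piece(1) by (intro diameter_bounded_bound) (auto intro: bounded_subset[OF bounded_sphere])
  then show "y \<in> slab n e0 i (\<delta> + 1 / real m + b)"
    using y piece by (intro mem_slab_perturbed[OF v(2) _ _ e0 ee0]) auto
qed

lemma small_radius_exists:
  fixes \<rho> :: real
  assumes "0 < \<rho>"
  obtains \<delta> where "0 < \<delta>" "\<delta> < 1" "\<delta> \<le> \<rho>" "real n * \<delta>\<^sup>2 < 1"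
proof -
  define \<delta> where "\<delta> = min \<rho> (1 / (real n + 2))"
  have \<delta>: "0 < \<delta>" "\<delta> < 1" "\<delta> \<le> \<rho>"
    unfolding \<delta>_def using assms by (auto simp: min_less_iff_disj)
  have "real n * \<delta>\<^sup>2 \<le> real n * \<delta>"
    using \<delta> by (intro mult_left_mono) (simp_all add: power2_eq_square mult_left_le_one_le)
  also have "\<dots> \<le> real n * (1 / (real n + 2))"
    unfolding \<delta>_def by (intro mult_left_mono) auto
  also have "\<dots> < 1"
    by (simp add: field_simps)
  finally show thesis
    using \<delta> that by blast
qed

lemma measure_approx_measure_normalized_slab_le:
  fixes \<mu> :: "'a::euclidean_space measure"
  assumes \<mu>: "sets \<mu> = sets borel" "finite_measure \<mu>" "emeasure \<mu> (- sphere 0 1) = 0"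
    and part: "sphere_partition m N U" and m: "1 \<le> m" and pts: "\<And>j. j \<in> {1..N} \<Longrightarrow> v j \<in> U j"
    and e0: "orthonormal_family DIM('a) e0" and i: "i \<in> {1..<DIM('a)}"
    and e_close: "\<And>l. l \<in> {1..DIM('a)} \<Longrightarrow> dist (e l) (e0 l) \<le> b"
    and radius: "\<delta> + 1 / real m + b \<le> \<rho>"
  shows "measure (approx_measure_normalized \<mu> N U v) (slab DIM('a) e i \<delta>)
           \<le> measure \<mu> (slab DIM('a) e0 i \<rho>) + 1 / real m"
proof -
  have "dist (e l) (e0 l) \<le> b" if "l \<in> {Suc i..DIM('a)}" for l
    using e_close that i by simp
  then have "U j \<subseteq> slab DIM('a) e0 i \<rho>" if "j \<in> {1..N}" "v j \<in> slab DIM('a) e i \<delta>" for j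
    using sphere_partition_piece_subset_slab[OF part that(1) pts[OF that(1)] that(2) e0]
      slab_mono[OF radius] by blast
  then have "measure (approx_measure_normalized \<mu> N U v) (slab DIM('a) e i \<delta>)
      \<le> measure \<mu> (slab DIM('a) e0 i \<rho>) + 1 / real N"
    by (intro measure_approx_measure_normalized_le[OF part \<mu>]) (auto intro: borel_closed closed_slab)
  moreover have "1 / real N \<le> 1 / real m"
    using m i sphere_partition_card_gt[OF part _ m] by (auto simp: frac_le)
  ultimately show ?thesis
    by linarith
qed

lemma exists_slab_margin:
  fixes \<mu> :: "'a::euclidean_space measure" and e :: "nat \<Rightarrow> 'a"
  assumes \<mu>: "finite_measure \<mu>" "sets \<mu> = sets borel" and onf: "orthonormal_family DIM('a) e"
    and gap: "\<And>i. i \<in> {1..<DIM('a)} \<Longrightarrow> measure \<mu> (span (e ` {1..i}) \<inter> sphere 0 1) < W i"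
  obtains t \<rho> where "0 < t" "t < 1" "0 < \<rho>"
    and "\<And>i. i \<in> {1..<DIM('a)} \<Longrightarrow> measure \<mu> (slab DIM('a) e i \<rho>) < (1 - t) * W i"
proof -
  have "\<forall>\<^sub>F t in at_right 0. \<forall>i\<in>{1..<DIM('a)}.
          measure \<mu> (span (e ` {1..i}) \<inter> sphere 0 1) < (1 - t) * W i"
  proof (intro eventually_ball_finite ballI)
    fix i assume i: "i \<in> {1..<DIM('a)}"
    have "((\<lambda>t. (1 - t) * W i) \<longlongrightarrow> (1 - 0) * W i) (at_right 0)"
      by (intro tendsto_intros)
    then show "\<forall>\<^sub>F t in at_right 0. measure \<mu> (span (e ` {1..i}) \<inter> sphere 0 1) < (1 - t) * W i"
      using gap[OF i] by (intro order_tendstoD(1)) auto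
  qed simp
  moreover have "\<forall>\<^sub>F t in at_right (0::real). t < 1"
    by (rule order_tendstoD(2)[OF tendsto_ident_at]) simp
  ultimately have "\<forall>\<^sub>F t in at_right (0::real). 0 < t \<and> t < 1 \<and> (\<forall>i\<in>{1..<DIM('a)}.
          measure \<mu> (span (e ` {1..i}) \<inter> sphere 0 1) < (1 - t) * W i)"
    by (intro eventually_conj eventually_at_right_less)
  then obtain t where t: "0 < t" "t < 1"
    and t_gap: "\<And>i. i \<in> {1..<DIM('a)} \<Longrightarrow> measure \<mu> (span (e ` {1..i}) \<inter> sphere 0 1) < (1 - t) * W i"
    using eventually_happens'[OF trivial_limit_at_right_real] by blast
  have "\<forall>\<^sub>F k in sequentially. \<forall>i\<in>{1..<DIM('a)}.
          measure \<mu> (slab DIM('a) e i (1 / (real k + 1))) < (1 - t) * W i"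
  proof (intro eventually_ball_finite ballI)
    fix i assume i: "i \<in> {1..<DIM('a)}"
    show "\<forall>\<^sub>F k in sequentially. measure \<mu> (slab DIM('a) e i (1 / (real k + 1))) < (1 - t) * W i"
      using i by (intro order_tendstoD(2)[OF tendsto_measure_slab[OF onf _ \<mu>] t_gap]) auto
  qed simp
  then obtain k where "\<And>i. i \<in> {1..<DIM('a)} \<Longrightarrow> measure \<mu> (slab DIM('a) e i (1 / (real k + 1))) < (1 - t) * W i"
    using eventually_happens'[OF sequentially_bot] by blast
  with t show thesis
    using that[of t "1 / (real k + 1)"] by simp
qed

lemma eventually_measure_approx_slab_le:
  fixes \<mu> :: "'a::euclidean_space measure"
  assumes \<mu>: "sets \<mu> = sets borel" "finite_measure \<mu>" "emeasure \<mu> (- sphere 0 1) = 0"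
    and part: "\<And>m. 1 \<le> m \<Longrightarrow> sphere_partition m (N m) (U m)"
    and pts: "\<And>m j. 1 \<le> m \<Longrightarrow> j \<in> {1..N m} \<Longrightarrow> v m j \<in> U m j"
    and e_lim: "\<And>l. l \<in> {1..DIM('a)} \<Longrightarrow> (\<lambda>m. e m l) \<longlonglongrightarrow> e0 l"
    and e0: "orthonormal_family DIM('a) e0"
    and gap: "\<And>i. i \<in> {1..<DIM('a)} \<Longrightarrow> measure \<mu> (span (e0 ` {1..i}) \<inter> sphere 0 1) < W i"
  obtains t \<delta> where "0 < t" "t < 1" "0 < \<delta>" "\<delta> < 1" "real DIM('a) * \<delta>\<^sup>2 < 1"
    and "\<forall>\<^sub>F m in sequentially. \<forall>i\<in>{1..<DIM('a)}.
           measure (approx_measure_normalized \<mu> (N m) (U m) (v m)) (slab DIM('a) (e m) i \<delta>)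
             \<le> (1 - t) * W i"
proof -
  let ?n = "DIM('a)"
  obtain t \<rho> where t: "0 < t" "t < 1" and \<rho>: "0 < \<rho>"
    and margin: "\<And>i. i \<in> {1..<?n} \<Longrightarrow> measure \<mu> (slab ?n e0 i \<rho>) < (1 - t) * W i"
    using exists_slab_margin[OF \<mu>(2,1) e0 gap] by blast
  (* The thirds of \<rho> absorb \<delta>, the diameter 1/m of the pieces, and the distance of e m from e0. *)
  obtain \<delta> where \<delta>: "0 < \<delta>" "\<delta> < 1" "\<delta> \<le> \<rho> / 3" "real ?n * \<delta>\<^sup>2 < 1"
    using small_radius_exists[of "\<rho> / 3"] \<rho> by auto
  have "\<forall>\<^sub>F m in sequentially. 1 \<le> m"
    by (rule eventually_ge_at_top)
  moreover have "\<forall>\<^sub>F m in sequentially. 1 / real m < \<rho> / 3"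
    using \<rho> by (intro order_tendstoD(2)[OF lim_1_over_n]) simp
  moreover have "\<forall>\<^sub>F m in sequentially. \<forall>l\<in>{1..?n}. dist (e m l) (e0 l) < \<rho> / 3"
  proof (intro eventually_ball_finite ballI)
    fix l assume "l \<in> {1..?n}"
    moreover have "0 < \<rho> / 3"
      using \<rho> by simp
    ultimately show "\<forall>\<^sub>F m in sequentially. dist (e m l) (e0 l) < \<rho> / 3"
      using tendsto_iff[THEN iffD1, OF e_lim] by blast
  qed simp
  moreover have "\<forall>\<^sub>F m in sequentially. \<forall>i\<in>{1..<?n}.
      measure \<mu> (slab ?n e0 i \<rho>) + 1 / real m < (1 - t) * W i"
    using margin
    by (intro eventually_ball_finite ballI order_tendstoD(2)[OF tendsto_add[OF tendsto_const lim_1_over_n]])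
      auto
  ultimately have "\<forall>\<^sub>F m in sequentially. \<forall>i\<in>{1..<?n}.
      measure (approx_measure_normalized \<mu> (N m) (U m) (v m)) (slab ?n (e m) i \<delta>) \<le> (1 - t) * W i"
  proof eventually_elim
    case (elim m)
    have radius: "\<delta> + 1 / real m + \<rho> / 3 \<le> \<rho>"
      using elim(2) \<delta>(3) by linarith
    have e_close: "\<And>l. l \<in> {1..?n} \<Longrightarrow> dist (e m l) (e0 l) \<le> \<rho> / 3"
      using elim(3) less_imp_le by blast
    show ?case
    proof
      fix i assume i: "i \<in> {1..<?n}"
      show "measure (approx_measure_normalized \<mu> (N m) (U m) (v m)) (slab ?n (e m) i \<delta>) \<le> (1 - t) * W i"
        using measure_approx_measure_normalized_slab_le[OF \<mu> part[OF elim(1)] elim(1) pts[OF elim(1)] e0 i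
            e_close radius] bspec[OF elim(4) i]
        by linarith
    qed
  qed
  with t \<delta> that show thesis
    by blast
qed

lemma summation_by_parts:
  fixes V L :: "nat \<Rightarrow> real"
  assumes "V 0 = 0"
  shows "(\<Sum>i\<in>{1..n}. (V i - V (i - 1)) * L i) = V n * L n - (\<Sum>i\<in>{1..<n}. V i * (L (Suc i) - L i))"
proof (induction n)
  case (Suc n)
  have "(\<Sum>i\<in>{1..<Suc n}. V i * (L (Suc i) - L i)) = (\<Sum>i\<in>{1..<n}. V i * (L (Suc i) - L i)) + V n * (L (Suc n) - L n)"
    using assms by (cases n) auto
  with Suc show ?case
    by (simp add: algebra_simps)
qed (simp add: assms)

definition subspace_threshold :: "nat \<Rightarrow> real \<Rightarrow> nat \<Rightarrow> real" where
  "subspace_threshold n q i = (real i + min (real i) (q - 1)) / (real n + q - 1)"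

lemma sum_subspace_threshold_by_parts:
  fixes q :: real and L :: "nat \<Rightarrow> real"
  assumes q: "1 < q" "q < real n + 1"
  defines "k \<equiv> nat \<lfloor>q\<rfloor>"
  shows "(\<Sum>i\<in>{1..k-1}. 2 / (real n + q - 1) * L i)
           + (q - real k + 1) / (real n + q - 1) * L k
           + (\<Sum>i\<in>{k+1..n}. 1 / (real n + q - 1) * L i)
         = L n - (\<Sum>i\<in>{1..<n}. subspace_threshold n q i * (L (Suc i) - L i))"
proof -
  let ?W = "subspace_threshold n q" and ?D = "real n + q - 1"
  have k: "1 \<le> k" "real k \<le> q" "q < real k + 1" "k \<le> n"
    using q unfolding k_def by linarith+
  have D: "0 < ?D"
    using q by simp
  have "?W i - ?W (i - 1) = 2 / ?D" if "i \<in> {1..k-1}" for i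
    using that k by (auto simp: subspace_threshold_def min_def diff_divide_distrib[symmetric] of_nat_diff)
  moreover have "?W k - ?W (k - 1) = (q - real k + 1) / ?D"
    using k by (auto simp: subspace_threshold_def min_def diff_divide_distrib[symmetric] of_nat_diff)
  moreover have "?W i - ?W (i - 1) = 1 / ?D" if "i \<in> {k+1..n}" for i
    using that k by (auto simp: subspace_threshold_def min_def diff_divide_distrib[symmetric] of_nat_diff)
  moreover have "(\<Sum>i\<in>{1..n}. f i) = (\<Sum>i\<in>{1..k-1}. f i) + f k + (\<Sum>i\<in>{k+1..n}. f i)"
    for f :: "nat \<Rightarrow> real"
  proof -
    have "{1..n} = {1..k-1} \<union> ({k} \<union> {k+1..n})"
      using k by auto
    then show ?thesis
      using k by (simp add: sum.union_disjoint add.assoc)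
  qed
  ultimately have "(\<Sum>i\<in>{1..n}. (?W i - ?W (i - 1)) * L i)
      = (\<Sum>i\<in>{1..k-1}. 2 / ?D * L i) + (q - real k + 1) / ?D * L k + (\<Sum>i\<in>{k+1..n}. 1 / ?D * L i)"
    by simp
  moreover have "?W 0 = 0" "?W n = 1"
    using k q D by (auto simp: subspace_threshold_def min_def)
  ultimately show ?thesis
    using summation_by_parts[of ?W L n] by simp
qed

lemma mean_ln_support_fun_ellipsoid_ge:
  fixes e v :: "nat \<Rightarrow> 'a::euclidean_space"
  defines "n \<equiv> DIM('a)"
  assumes \<nu>: "\<nu> = discrete_measure N v p" and p: "\<And>j. j \<in> {1..N} \<Longrightarrow> 0 \<le> p j"
    and v: "\<And>j. j \<in> {1..N} \<Longrightarrow> norm (v j) = 1" and mass: "0 < total_mass \<nu>"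
    and onf: "orthonormal_family n e" and r_pos: "\<And>i. i \<in> {1..n} \<Longrightarrow> 0 < r i"
    and r_mono: "\<And>i. i \<in> {1..<n} \<Longrightarrow> r i \<le> r (Suc i)"
    and \<delta>: "0 < \<delta>" "real n * \<delta>\<^sup>2 < 1"
    and slab_mass: "\<And>i. i \<in> {1..<n} \<Longrightarrow> measure \<nu> (slab n e i \<delta>) \<le> total_mass \<nu> * W i"
  shows "ln \<delta> + ln (r n) - (\<Sum>i\<in>{1..<n}. W i * (ln (r (Suc i)) - ln (r i)))
           \<le> (1 / total_mass \<nu>) * (LINT x:sphere 0 1|\<nu>. ln (support_fun (ellipsoid n e r) x))"
proof -
  let ?P = "total_mass \<nu>"
  define h where "h x = ln (support_fun (ellipsoid n e r) x)" for x
  define d where "d i = ln (r (Suc i)) - ln (r i)" for i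
  have "(\<lambda>x. indicator (sphere 0 1) x *\<^sub>R h x) \<in> borel_measurable borel"
    unfolding h_def n_def
    by (intro borel_measurable_continuous_on_indicator continuous_on_ln_support_fun_ellipsoid)
      (use onf r_pos in \<open>simp_all add: n_def\<close>)
  then have integral: "(LINT x:sphere 0 1|\<nu>. h x)
      = (\<Sum>j\<in>{1..N}. p j * (indicator (sphere 0 1) (v j) *\<^sub>R h (v j)))"
    unfolding set_lebesgue_integral_def \<nu> by (rule integral_discrete_measure) (use p in auto)
  have "?P * (ln \<delta> + ln (r n)) - (\<Sum>i\<in>{1..<n}. d i * (?P * W i))
      \<le> ?P * (ln \<delta> + ln (r n)) - (\<Sum>i\<in>{1..<n}. d i * measure \<nu> (slab n e i \<delta>))"
    using slab_mass r_pos r_mono unfolding d_def by (intro diff_left_mono sum_mono mult_left_mono) auto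
  also have "\<dots> = (\<Sum>j\<in>{1..N}. p j * (ln \<delta> + ln (r n) - (\<Sum>i\<in>{1..<n}. d i * indicator (slab n e i \<delta>) (v j))))"
    unfolding \<nu> using p by (intro sum_discrete_measure_affine_indicators[symmetric] borel_closed closed_slab)
  also have "\<dots> \<le> (\<Sum>j\<in>{1..N}. p j * h (v j))"
    unfolding h_def d_def n_def using p v onf r_pos \<delta>
    by (intro sum_mono mult_left_mono ln_support_fun_ellipsoid_ge) (auto simp: n_def)
  also have "\<dots> = (LINT x:sphere 0 1|\<nu>. h x)"
    unfolding integral using v by (intro sum.cong) auto
  finally have "?P * (ln \<delta> + ln (r n) - (\<Sum>i\<in>{1..<n}. W i * d i)) \<le> (LINT x:sphere 0 1|\<nu>. h x)"
    by (simp add: algebra_simps sum_distrib_left)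
  then show ?thesis
    using mass unfolding h_def d_def by (simp add: field_simps)
qed

lemma pos_if_increasing_from_pos:
  fixes r :: "nat \<Rightarrow> real"
  assumes "0 < r 1" "\<And>i. 1 \<le> i \<Longrightarrow> i < n \<Longrightarrow> r i \<le> r (Suc i)" "i \<in> {1..n}"
  shows "0 < r i"
proof -
  have "1 \<le> i"
    using assms(3) by simp
  then have "i \<le> n \<longrightarrow> 0 < r i"
  proof (induction i rule: dec_induct)
    case (step k)
    then show ?case
      using assms(2)[of k] by force
  qed (use assms(1) in auto)
  with assms(3) show ?thesis
    by simp
qed

lemma mean_ln_support_fun_ellipsoid_approx_ge:
  fixes \<mu> :: "'a::euclidean_space measure" and N :: nat and U :: "nat \<Rightarrow> 'a set"
    and v e :: "nat \<Rightarrow> 'a" and q :: real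
  defines "n \<equiv> DIM('a)" and "k \<equiv> nat \<lfloor>q\<rfloor>" and "\<nu> \<equiv> approx_measure_normalized \<mu> N U v"
  assumes q: "1 < q" "q < real n + 1" and t: "t \<le> 1"
    and \<mu>: "sets \<mu> = sets borel" "finite_measure \<mu>" "emeasure \<mu> (- sphere 0 1) = 0"
    and P: "0 < total_mass \<mu>"
    and part: "sphere_partition m N U" and pts: "\<And>j. j \<in> {1..N} \<Longrightarrow> v j \<in> U j"
    and onf: "orthonormal_family n e" and r_1: "0 < r 1"
    and r_mono: "\<And>i. 1 \<le> i \<Longrightarrow> i < n \<Longrightarrow> r i \<le> r (Suc i)"
    and \<delta>: "0 < \<delta>" "real n * \<delta>\<^sup>2 < 1"
    and slab_mass: "\<And>i. i \<in> {1..<n} \<Longrightarrow>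
          measure \<nu> (slab n e i \<delta>) \<le> (1 - t) * (total_mass \<mu> * subspace_threshold n q i)"
  shows "ln (\<delta> / 2) + t * ln (r n)
           + (1 - t) * ((\<Sum>i\<in>{1..k-1}. 2 / (real n + q - 1) * ln (r i))
               + (q - real k + 1) / (real n + q - 1) * ln (r k)
               + (\<Sum>i\<in>{k+1..n}. 1 / (real n + q - 1) * ln (r i)))
         \<le> (1 / total_mass \<nu>) * (LINT x:sphere 0 1|\<nu>. ln (support_fun (ellipsoid n e r) x))"
proof -
  let ?S = "\<Sum>i\<in>{1..<n}. subspace_threshold n q i * (ln (r (Suc i)) - ln (r i))"
  obtain p where \<nu>_discrete: "\<nu> = discrete_measure N v p" and p: "\<And>j. 0 \<le> p j"
    unfolding \<nu>_def using approx_measure_normalized_discrete by blast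
  have mass: "total_mass \<nu> = total_mass \<mu>"
    unfolding \<nu>_def by (rule total_mass_approx_measure_normalized[OF part \<mu>])
  have v: "norm (v j) = 1" if "j \<in> {1..N}" for j
    using pts[OF that] part that unfolding sphere_partition_def by auto
  have r_pos: "0 < r i" if "i \<in> {1..n}" for i
    using pos_if_increasing_from_pos[OF r_1 r_mono that] .
  have by_parts: "(\<Sum>i\<in>{1..k-1}. 2 / (real n + q - 1) * ln (r i))
      + (q - real k + 1) / (real n + q - 1) * ln (r k)
      + (\<Sum>i\<in>{k+1..n}. 1 / (real n + q - 1) * ln (r i))
      = ln (r n) - ?S"
    unfolding k_def by (rule sum_subspace_threshold_by_parts[OF q])
  have "ln (\<delta> / 2) \<le> ln \<delta>"
    using \<delta>(1) by simp
  moreover have "t * ln (r n) + (1 - t) * (ln (r n) - ?S) = ln (r n) - (1 - t) * ?S"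
    by (simp add: algebra_simps)
  ultimately have "ln (\<delta> / 2) + t * ln (r n)
           + (1 - t) * ((\<Sum>i\<in>{1..k-1}. 2 / (real n + q - 1) * ln (r i))
               + (q - real k + 1) / (real n + q - 1) * ln (r k)
               + (\<Sum>i\<in>{k+1..n}. 1 / (real n + q - 1) * ln (r i)))
      \<le> ln \<delta> + ln (r n) - (1 - t) * ?S"
    unfolding by_parts by linarith
  also have "\<dots> = ln \<delta> + ln (r n)
      - (\<Sum>i\<in>{1..<n}. (1 - t) * subspace_threshold n q i * (ln (r (Suc i)) - ln (r i)))"
    by (simp add: sum_distrib_left mult.assoc)
  also have "\<dots> \<le> (1 / total_mass \<nu>) * (LINT x:sphere 0 1|\<nu>. ln (support_fun (ellipsoid n e r) x))"
    unfolding n_def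
    by (rule mean_ln_support_fun_ellipsoid_ge[OF \<nu>_discrete p v])
      (use mass P onf r_pos r_mono \<delta> slab_mass in \<open>simp_all add: n_def mult.left_commute\<close>)
  finally show ?thesis .
qed

theorem lemma5p11:
  fixes \<mu> :: "(real^'n) measure"
    and q :: real
    and N :: "nat \<Rightarrow> nat"
    and U :: "nat \<Rightarrow> nat \<Rightarrow> (real^'n) set"
    and v :: "nat \<Rightarrow> nat \<Rightarrow> real^'n"
    and e :: "nat \<Rightarrow> nat \<Rightarrow> real^'n"
    and e0 :: "nat \<Rightarrow> real^'n"
    and r :: "nat \<Rightarrow> nat \<Rightarrow> real"
  defines "n \<equiv> CARD('n)"
  assumes q: "1 < q" "q < real n + 1"
    and \<mu>_borel: "sets \<mu> = sets borel"
    and \<mu>_finite: "finite_measure \<mu>"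
    and \<mu>_sphere: "emeasure \<mu> (- sphere 0 1) = 0"
    and \<mu>_nonzero: "total_mass \<mu> \<noteq> 0"
    and partition: "\<And>m. m \<ge> 1 \<Longrightarrow> sphere_partition m (N m) (U m)"
    and pts: "\<And>m i. m \<ge> 1 \<Longrightarrow> i \<in> {1..N m} \<Longrightarrow> v m i \<in> U m i"
    and genpos: "\<And>m. m \<ge> 1 \<Longrightarrow> general_position n {1..N m} (v m)"
    and onb: "\<And>m. m \<ge> 1 \<Longrightarrow> orthonormal_family n (e m)"
    and r_pos: "\<And>m. m \<ge> 1 \<Longrightarrow> 0 < r m 1"
    and r_mono: "\<And>m i. m \<ge> 1 \<Longrightarrow> 1 \<le> i \<Longrightarrow> i < n \<Longrightarrow> r m i \<le> r m (Suc i)"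
    and r_n: "\<And>m. m \<ge> 1 \<Longrightarrow> r m n \<ge> 1"
    and e_lim: "\<And>i. i \<in> {1..n} \<Longrightarrow> (\<lambda>m. e m i) \<longlonglongrightarrow> e0 i"
    and e0_onb: "orthonormal_family n e0"
    and subspace_cond: "\<And>\<xi> i. i \<in> {1..n-1} \<Longrightarrow> subspace \<xi> \<Longrightarrow> dim \<xi> = i \<Longrightarrow>
          measure \<mu> (\<xi> \<inter> sphere 0 1) / total_mass \<mu>
            < (real i + min (real i) (q - 1)) / (real n + q - 1)"
  shows "\<exists>\<delta>0 t0 N0::real. 0 < \<delta>0 \<and> \<delta>0 < 1 \<and> 0 < t0 \<and> t0 < 1 \<and> 0 < N0 \<and>
     (\<forall>m::nat. real m > N0 \<longrightarrow>
        (let \<nu> = approx_measure_normalized \<mu> (N m) (U m) (v m);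
             E = ellipsoid n (e m) (r m);
             k = nat \<lfloor>q\<rfloor>
         in (1 / total_mass \<nu>) * (LINT x : sphere 0 1 | \<nu>. ln (support_fun E x))
            \<ge> ln (\<delta>0 / 2) + t0 * ln (r m n)
              + (1 - t0) * ((\<Sum>i\<in>{1..k-1}. 2 / (real n + q - 1) * ln (r m i))
                  + (q - real k + 1) / (real n + q - 1) * ln (r m k)
                  + (\<Sum>i\<in>{k+1..n}. 1 / (real n + q - 1) * ln (r m i)))))"
proof -
  let ?\<nu> = "\<lambda>m. approx_measure_normalized \<mu> (N m) (U m) (v m)"
  have n: "DIM(real^'n) = n"
    unfolding n_def by simp
  have P: "0 < total_mass \<mu>"
    using \<mu>_nonzero measure_nonneg[of \<mu> "space \<mu>"] unfolding total_mass_def by linarith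
  have gap: "measure \<mu> (span (e0 ` {1..i}) \<inter> sphere 0 1) < total_mass \<mu> * subspace_threshold n q i"
    if "i \<in> {1..<n}" for i
    using subspace_cond[of i "span (e0 ` {1..i})"] that P
      dim_span_orthonormal_family[OF orthonormal_family_mono[OF e0_onb, of i]]
    by (auto simp: subspace_threshold_def pos_divide_less_eq mult.commute)
  obtain t \<delta> where t: "0 < t" "t < 1" and \<delta>: "0 < \<delta>" "\<delta> < 1" "real n * \<delta>\<^sup>2 < 1"
    and "\<forall>\<^sub>F m in sequentially. \<forall>i\<in>{1..<n}.
           measure (?\<nu> m) (slab n (e m) i \<delta>) \<le> (1 - t) * (total_mass \<mu> * subspace_threshold n q i)"
    using eventually_measure_approx_slab_le[where 'a = "real^'n", unfolded n,
        OF \<mu>_borel \<mu>_finite \<mu>_sphere partition pts e_lim e0_onb gap] by blast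
  then obtain M where M: "\<And>m i. M \<le> m \<Longrightarrow> i \<in> {1..<n} \<Longrightarrow>
      measure (?\<nu> m) (slab n (e m) i \<delta>) \<le> (1 - t) * (total_mass \<mu> * subspace_threshold n q i)"
    unfolding eventually_sequentially by blast
  have "ln (\<delta> / 2) + t * ln (r m n)
          + (1 - t) * ((\<Sum>i\<in>{1..nat \<lfloor>q\<rfloor>-1}. 2 / (real n + q - 1) * ln (r m i))
              + (q - real (nat \<lfloor>q\<rfloor>) + 1) / (real n + q - 1) * ln (r m (nat \<lfloor>q\<rfloor>))
              + (\<Sum>i\<in>{nat \<lfloor>q\<rfloor>+1..n}. 1 / (real n + q - 1) * ln (r m i)))
        \<le> (1 / total_mass (?\<nu> m)) * (LINT x:sphere 0 1|?\<nu> m. ln (support_fun (ellipsoid n (e m) (r m)) x))"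
    if "real (max 1 M) < real m" for m
  proof -
    have m: "1 \<le> m" "M \<le> m"
      using that by auto
    show ?thesis
      by (rule mean_ln_support_fun_ellipsoid_approx_ge[where 'a = "real^'n", unfolded n,
            OF q less_imp_le[OF t(2)] \<mu>_borel \<mu>_finite \<mu>_sphere P partition[OF m(1)] pts[OF m(1)]
            onb[OF m(1)] r_pos[OF m(1)] r_mono[OF m(1)] \<delta>(1,3) M[OF m(2)]])
  qed
  then show ?thesis
    using t \<delta> by (intro exI[of _ \<delta>] exI[of _ t] exI[of _ "real (max 1 M)"]) (auto simp: Let_def)
qed

end
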